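(* Let $d\ge3$ and let $G$ be a $d$-map endowed with a $d$-GS arc labeling. Then for every inner face $f$ of $G$, the $f$-clockwise jumps are all non-zero and they sum to $d$.
   Context: A plane map is a connected graph (loops, multiple edges allowed) embedded in the plane without crossings, up to deformation; outer (unbounded) face, inner faces; outer vertices/edges lie on the outer face; $\deg(f)$ = number of corners of face $f$. For $d\ge3$, a $d$-map has inner faces of degree $\le d$ and outer face of degree $d$ bounded by a simple cycle, with outer vertices $v_1,\dots,v_d$ clockwise (indices mod $d$). An arc is a directed edge; $-a$ its opposite. An arc labeling assigns a label in $[d]$ to every inner arc and label $i$ to the outer arc $(v_i,v_{i+1})$ for each $i\in[d]$. Label jump from label $i$ to $i'$: the $\delta\in\{0,\dots,d-1\}$ with $i+\delta\equiv i'\pmod d$. For an inner vertex $v$, a $v$-clockwise jump is the jump from an arc with initial vertex $v$ to the next such arc in clockwise order around $v$. For an inner face $f$, consider the arcs incident to $f$ having $f$ on their right; an $f$-clockwise jump is the jump from such an arc to the next one in clockwise order around $f$. A $d$-GS arc labeling is an arc labeling such that: (AL0) for all $i$, every inner arc with initial vertex $v_i$ has label $i$; (AL1) for every inner vertex $v$, the $v$-clockwise jumps sum to $d$; (AL2) for two consecutive arcs $a,a'$ in clockwise order around an inner vertex $v$ (both with initial vertex $v$), the jump from $a$ to $a'$ is at most $d-\deg(f)$, where $f$ is the face containing the corner between $a$ and $a'$; (AL3) for opposite inner arcs $a,-a$, the jump from the label of $a$ to the label of $-a$ equals $d+1-\deg(f)$, where $f$ is the face on the right of $a$. *)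

theory Defs
  imports Main
begin

text \<open>Plane maps as combinatorial maps (rotation systems) on a finite set D of arcs (darts).
  \<alpha> a is the opposite arc -a; \<sigma> a is the next arc after a in clockwise order around its
  initial vertex. Vertices = \<sigma>-orbits, edges = \<alpha>-orbits, faces = orbits of
  face_succ, which maps an arc a to the next arc (clockwise around the face) having
  the same face on its right. Planarity = connectivity + Euler's formula V - E + F = 2.\<close>

definition orb :: "('a \<Rightarrow> 'a) \<Rightarrow> 'a \<Rightarrow> 'a set" where
  "orb f a = range (\<lambda>n. (f ^^ n) a)"

definition face_succ :: "'a set \<Rightarrow> ('a \<Rightarrow> 'a) \<Rightarrow> ('a \<Rightarrow> 'a) \<Rightarrow> 'a \<Rightarrow> 'a" where
  "face_succ D \<alpha> \<sigma> a = inv_into D \<sigma> (\<alpha> a)"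

definition plane_map :: "'a set \<Rightarrow> ('a \<Rightarrow> 'a) \<Rightarrow> ('a \<Rightarrow> 'a) \<Rightarrow> bool" where
  "plane_map D \<alpha> \<sigma> \<longleftrightarrow>
     finite D \<and> D \<noteq> {} \<and> bij_betw \<sigma> D D \<and>
     (\<forall>a\<in>D. \<alpha> a \<in> D \<and> \<alpha> a \<noteq> a \<and> \<alpha> (\<alpha> a) = a) \<and>
     (\<forall>a\<in>D. \<forall>b\<in>D. (a, b) \<in> ({(x, \<sigma> x) | x. x \<in> D} \<union> {(x, \<alpha> x) | x. x \<in> D})\<^sup>*) \<and>
     int (card (orb \<sigma> ` D)) - int (card (orb \<alpha> ` D))
       + int (card (orb (face_succ D \<alpha> \<sigma>) ` D)) = 2"

text \<open>The arc oa is (v_1, v_d): the outer face is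
  on the right of arcs (v_{i+1}, v_i).
  The outer face boundary is a simple cycle: its d arcs have pairwise distinct initial vertices.\<close>

definition d_map :: "'a set \<Rightarrow> ('a \<Rightarrow> 'a) \<Rightarrow> ('a \<Rightarrow> 'a) \<Rightarrow> nat \<Rightarrow> 'a \<Rightarrow> bool" where
  "d_map D \<alpha> \<sigma> d oa \<longleftrightarrow>
     plane_map D \<alpha> \<sigma> \<and> 3 \<le> d \<and> oa \<in> D \<and>
     card (orb (face_succ D \<alpha> \<sigma>) oa) = d \<and>
     inj_on (orb \<sigma>) (orb (face_succ D \<alpha> \<sigma>) oa) \<and>
     (\<forall>a\<in>D. a \<notin> orb (face_succ D \<alpha> \<sigma>) oa \<longrightarrow> card (orb (face_succ D \<alpha> \<sigma>) a) \<le> d)"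

text \<open>Outer arc (v_i, v_{i+1}) for i in {1..d}.\<close>
definition outer_arc :: "'a set \<Rightarrow> ('a \<Rightarrow> 'a) \<Rightarrow> ('a \<Rightarrow> 'a) \<Rightarrow> nat \<Rightarrow> 'a \<Rightarrow> nat \<Rightarrow> 'a" where
  "outer_arc D \<alpha> \<sigma> d oa i = \<alpha> ((face_succ D \<alpha> \<sigma> ^^ (d - i)) oa)"

definition inner_arc :: "'a set \<Rightarrow> ('a \<Rightarrow> 'a) \<Rightarrow> ('a \<Rightarrow> 'a) \<Rightarrow> 'a \<Rightarrow> 'a \<Rightarrow> bool" where
  "inner_arc D \<alpha> \<sigma> oa a \<longleftrightarrow> a \<in> D \<and> a \<notin> orb (face_succ D \<alpha> \<sigma>) oa
      \<and> \<alpha> a \<notin> orb (face_succ D \<alpha> \<sigma>) oa"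

text \<open>Inner vertex (represented by any arc with that initial vertex): no arc starting there
  lies on the outer face.\<close>
definition inner_vertex :: "'a set \<Rightarrow> ('a \<Rightarrow> 'a) \<Rightarrow> ('a \<Rightarrow> 'a) \<Rightarrow> 'a \<Rightarrow> 'a \<Rightarrow> bool" where
  "inner_vertex D \<alpha> \<sigma> oa a \<longleftrightarrow> a \<in> D \<and> orb \<sigma> a \<inter> orb (face_succ D \<alpha> \<sigma>) oa = {}"

definition jump :: "nat \<Rightarrow> nat \<Rightarrow> nat \<Rightarrow> nat" where
  "jump d i i' = (i' + d - i) mod d"

definition GS_labeling ::
  "'a set \<Rightarrow> ('a \<Rightarrow> 'a) \<Rightarrow> ('a \<Rightarrow> 'a) \<Rightarrow> nat \<Rightarrow> 'a \<Rightarrow> ('a \<Rightarrow> nat) \<Rightarrow> bool" where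
  "GS_labeling D \<alpha> \<sigma> d oa lab \<longleftrightarrow>
     (\<forall>a. inner_arc D \<alpha> \<sigma> oa a \<longrightarrow> lab a \<in> {1..d}) \<and>
     (\<forall>i\<in>{1..d}. lab (outer_arc D \<alpha> \<sigma> d oa i) = i) \<and>
     \<comment> \<open>AL0\<close>
     (\<forall>i\<in>{1..d}. \<forall>a. inner_arc D \<alpha> \<sigma> oa a \<and> orb \<sigma> a = orb \<sigma> (outer_arc D \<alpha> \<sigma> d oa i)
         \<longrightarrow> lab a = i) \<and>
     \<comment> \<open>AL1\<close>
     (\<forall>a. inner_vertex D \<alpha> \<sigma> oa a \<longrightarrow> (\<Sum>b\<in>orb \<sigma> a. jump d (lab b) (lab (\<sigma> b))) = d) \<and>
     \<comment> \<open>AL2: the corner between a and \<sigma> a lies in the face on the right of a\<close>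
     (\<forall>a. inner_vertex D \<alpha> \<sigma> oa a \<longrightarrow>
         jump d (lab a) (lab (\<sigma> a)) \<le> d - card (orb (face_succ D \<alpha> \<sigma>) a)) \<and>
     \<comment> \<open>AL3\<close>
     (\<forall>a. inner_arc D \<alpha> \<sigma> oa a \<longrightarrow>
         jump d (lab a) (lab (\<alpha> a)) = d + 1 - card (orb (face_succ D \<alpha> \<sigma>) a))"

end

theory Submission
  imports Defs
begin

text \<open>For an arc \<open>b\<close> on an inner face, the next arc \<open>\<phi> b\<close> of the face leaves the head of \<open>b\<close>,
  and \<open>\<sigma> (\<phi> b) = \<alpha> b\<close>. So the jump from \<open>b\<close> to \<open>\<phi> b\<close> is the jump from \<open>b\<close> to \<open>\<alpha> b\<close>,
  fixed by (AL3), minus the jump at the corner from \<open>\<phi> b\<close> to \<open>\<alpha> b\<close>, bounded by (AL2); this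
  makes it positive. At the outer vertices (AL0) fixes all labels and the same identity holds
  with the corner term 0. Summing over all arcs of inner faces, (AL1) at the inner vertices,
  (AL3) on the inner edges and Euler's formula show that all face jumps together add up to
  \<open>d\<close> times the number of inner faces. Around a single face the jumps add up to a positive
  multiple of \<open>d\<close>, hence to at least \<open>d\<close>, so every face gets exactly \<open>d\<close>.\<close>

section \<open>Orbits of a permutation of a finite set\<close>

lemma self_in_orb: "a \<in> orb f a"
  unfolding orb_def by (metis funpow_0 rangeI)

lemma funpow_in_orb: "b \<in> orb f a \<Longrightarrow> (f ^^ n) b \<in> orb f a"
  unfolding orb_def by (auto simp flip: funpow_add[unfolded comp_def, THEN fun_cong])

lemma f_in_orb: "b \<in> orb f a \<Longrightarrow> f b \<in> orb f a"
  using funpow_in_orb[of b f a 1] by simp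

locale finite_perm =
  fixes D :: "'a set" and f :: "'a \<Rightarrow> 'a"
  assumes finite_D: "finite D" and bij: "bij_betw f D D"
begin

lemma funpow_mem: "a \<in> D \<Longrightarrow> (f ^^ n) a \<in> D"
  using bij_betwE[OF bij_betw_funpow[OF bij]] by blast

lemma orb_subset: "a \<in> D \<Longrightarrow> orb f a \<subseteq> D"
  unfolding orb_def using funpow_mem by blast

lemma funpow_cancel:
  assumes "a \<in> D" "i \<le> j" "(f ^^ j) a = (f ^^ i) a"
  shows "(f ^^ (j - i)) a = a"
proof -
  have "(f ^^ i) ((f ^^ (j - i)) a) = (f ^^ i) a"
    using assms(2,3) by (simp flip: funpow_add[unfolded comp_def, THEN fun_cong])
  then show ?thesis
    using bij_betw_imp_inj_on[OF bij_betw_funpow[OF bij]] funpow_mem assms(1)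
    by (meson inj_onD)
qed

lemma exists_period: assumes "a \<in> D" shows "\<exists>p>0. (f ^^ p) a = a"
proof -
  have "finite (range (\<lambda>n. (f ^^ n) a))"
    using finite_subset[OF orb_subset[OF assms, unfolded orb_def] finite_D] .
  then have "\<not> inj (\<lambda>n. (f ^^ n) a)"
    using finite_imageD infinite_UNIV_nat by blast
  then obtain i j where "i < j" "(f ^^ j) a = (f ^^ i) a"
    using linorder_injI by (metis (no_types, lifting))
  then show ?thesis
    using funpow_cancel[OF assms, of i j] by (intro exI[of _ "j - i"]) auto
qed

lemma funpow_eq_self_iff:
  assumes "a \<in> D" shows "(f ^^ n) a = a \<longleftrightarrow> card (orb f a) dvd n"
proof -
  define p where "p = (LEAST p. 0 < p \<and> (f ^^ p) a = a)"
  have p: "0 < p" "(f ^^ p) a = a"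
    using LeastI_ex[OF exists_period[OF assms]] unfolding p_def by auto
  have minimal: "(f ^^ m) a \<noteq> a" if "0 < m" "m < p" for m
    using not_less_Least that unfolding p_def by blast
  have "orb f a = (\<lambda>m. (f ^^ m) a) ` {..<p}"
    unfolding orb_def using p funpow_mod_eq[OF p(2)] by (auto intro!: image_eqI[of _ _ "_ mod p"])
  moreover have "inj_on (\<lambda>m. (f ^^ m) a) {..<p}"
  proof (rule linorder_inj_onI')
    fix i j assume "i \<in> {..<p}" "j \<in> {..<p}" "i < j"
    then show "(f ^^ i) a \<noteq> (f ^^ j) a"
      using minimal[of "j - i"] funpow_cancel[OF assms, of i j] by auto
  qed
  ultimately have card: "card (orb f a) = p"
    by (simp add: card_image)
  show ?thesis
  proof
    assume "(f ^^ n) a = a"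
    then have "(f ^^ (n mod p)) a = a"
      using funpow_mod_eq[OF p(2)] by simp
    then show "card (orb f a) dvd n"
      using minimal[of "n mod p"] p(1) card by (auto simp: dvd_eq_mod_eq_0)
  next
    assume "card (orb f a) dvd n"
    then show "(f ^^ n) a = a"
      using funpow_mod_eq[OF p(2), of n] card by (simp add: dvd_eq_mod_eq_0)
  qed
qed

lemma orb_eq:
  assumes "a \<in> D" "b \<in> orb f a" shows "orb f b = orb f a"
proof
  show "orb f b \<subseteq> orb f a"
    using assms(2) unfolding orb_def[of f b] by (auto intro: funpow_in_orb)
  obtain n where b: "b = (f ^^ n) a"
    using assms(2) unfolding orb_def by blast
  have "0 < card (orb f a)"
    using finite_subset[OF orb_subset[OF assms(1)] finite_D] self_in_orb card_gt_0_iff by fast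
  then have "card (orb f a) * n - n + n = card (orb f a) * n"
    by simp
  then have "(f ^^ (card (orb f a) * n - n)) b = (f ^^ (card (orb f a) * n)) a"
    unfolding b by (metis comp_apply funpow_add)
  also have "\<dots> = a"
    using funpow_eq_self_iff[OF assms(1)] by simp
  finally have "a \<in> orb f b"
    unfolding orb_def by (metis rangeI)
  then show "orb f a \<subseteq> orb f b"
    unfolding orb_def[of f a] by (auto intro: funpow_in_orb)
qed

lemma image_orb: assumes "a \<in> D" shows "f ` orb f a = orb f a"
proof
  show "f ` orb f a \<subseteq> orb f a"
    by (intro image_subsetI f_in_orb)
  show "orb f a \<subseteq> f ` orb f a"
  proof
    fix b assume b: "b \<in> orb f a"
    then have "b \<in> orb f (f b)"
      using orb_eq[OF assms f_in_orb[OF b]] by simp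
    then obtain n where n: "b = (f ^^ n) (f b)"
      unfolding orb_def by blast
    have "b = f ((f ^^ n) b)"
      unfolding funpow_swap1 by (rule n)
    then show "b \<in> f ` orb f a"
      using funpow_in_orb[OF b] by (rule image_eqI)
  qed
qed

lemma sum_orb_shift:
  assumes "a \<in> D" shows "(\<Sum>b\<in>orb f a. g (f b)) = (\<Sum>b\<in>orb f a. g b)"
proof -
  have "inj_on f (orb f a)"
    using inj_on_subset[OF bij_betw_imp_inj_on[OF bij] orb_subset[OF assms]] .
  from sum.reindex[OF this, of g] show ?thesis
    unfolding image_orb[OF assms] by (simp add: comp_def)
qed

lemma sum_over_orbits:
  assumes "S \<subseteq> D" "\<And>x. x \<in> S \<Longrightarrow> orb f x \<subseteq> S"
  shows "sum g S = (\<Sum>c\<in>orb f ` S. sum g c)"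
proof -
  have fibre: "{x \<in> S. orb f x = orb f y} = orb f y" if y: "y \<in> S" for y
  proof (intro equalityI subsetI)
    fix x assume "x \<in> {x \<in> S. orb f x = orb f y}"
    then show "x \<in> orb f y"
      using self_in_orb[of x f] by simp
  next
    fix x assume "x \<in> orb f y"
    then show "x \<in> {x \<in> S. orb f x = orb f y}"
      using assms y orb_eq[of y x] by auto
  qed
  have "sum g S = (\<Sum>c\<in>orb f ` S. sum g {x \<in> S. orb f x = c})"
    by (rule sum.image_gen[OF finite_subset[OF assms(1) finite_D]])
  also have "\<dots> = (\<Sum>c\<in>orb f ` S. sum g c)"
    by (intro sum.cong refl) (clarsimp simp: fibre)
  finally show ?thesis .
qed

end

section \<open>Label jumps\<close>

lemma jump_eq_mod:
  assumes "x \<le> d" shows "int (jump d x y) = (int y - int x) mod int d"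
proof -
  have "int (jump d x y) = (int y - int x + int d) mod int d"
    using assms by (simp add: jump_def zmod_int of_nat_diff algebra_simps)
  then show ?thesis
    by simp
qed

lemma jump_less: "0 < d \<Longrightarrow> jump d x y < d"
  by (simp add: jump_def)

lemma jump_add_jump_swap:
  assumes "x \<le> d" "y \<le> d" "jump d x y \<noteq> 0"
  shows "jump d x y + jump d y x = d"
proof -
  have "(int y - int x) mod int d \<noteq> 0"
    using assms(3) by (simp flip: jump_eq_mod[OF assms(1)])
  then have "(int x - int y) mod int d = int d - (int y - int x) mod int d"
    using zmod_zminus1_eq_if[of "int y - int x" "int d"] by simp
  then show ?thesis
    using jump_eq_mod[OF assms(1), of y] jump_eq_mod[OF assms(2), of x] by simp
qed

lemma jump_split:
  assumes "x \<le> d" "z \<le> d" "jump d z y < jump d x y"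
  shows "jump d x z = jump d x y - jump d z y"
proof -
  have "0 < d"
  proof (rule ccontr)
    assume "\<not> 0 < d"
    then have "x = z"
      using assms(1,2) by simp
    then show False
      using assms(3) by simp
  qed
  have "int z - int x = (int y - int x) - (int y - int z)"
    by simp
  then have "int (jump d x z) = (int (jump d x y) - int (jump d z y)) mod int d"
    using jump_eq_mod assms(1,2) by (metis mod_diff_eq)
  also have "\<dots> = int (jump d x y) - int (jump d z y)"
    using assms(3) jump_less[OF \<open>0 < d\<close>, of x y] by simp
  finally show ?thesis
    using assms(3) by simp
qed

section \<open>The outer face of a \<open>d\<close>-map\<close>

locale plane_d_map =
  fixes D :: "'a set" and \<alpha> \<sigma> :: "'a \<Rightarrow> 'a" and d :: nat and oa :: 'a
  assumes d_map: "d_map D \<alpha> \<sigma> d oa"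
begin

abbreviation \<phi> :: "'a \<Rightarrow> 'a" where "\<phi> \<equiv> face_succ D \<alpha> \<sigma>"
abbreviation outer :: "'a set" where "outer \<equiv> orb \<phi> oa"

lemma finite_D: "finite D"
  and bij_\<sigma>: "bij_betw \<sigma> D D"
  and \<alpha>_mem: "a \<in> D \<Longrightarrow> \<alpha> a \<in> D"
  and \<alpha>_neq: "a \<in> D \<Longrightarrow> \<alpha> a \<noteq> a"
  and \<alpha>_\<alpha>: "a \<in> D \<Longrightarrow> \<alpha> (\<alpha> a) = a"
  and euler: "int (card (orb \<sigma> ` D)) - int (card (orb \<alpha> ` D)) + int (card (orb \<phi> ` D)) = 2"
  and three_le_d: "3 \<le> d"
  and oa_mem: "oa \<in> D"
  and card_outer: "card outer = d"
  and inj_on_vertex_outer: "inj_on (orb \<sigma>) outer"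
  and face_degree_le: "a \<in> D \<Longrightarrow> a \<notin> outer \<Longrightarrow> card (orb \<phi> a) \<le> d"
  using d_map unfolding d_map_def plane_map_def by auto

lemma bij_\<alpha>: "bij_betw \<alpha> D D"
  by (rule bij_betw_byWitness[where f'=\<alpha>]) (auto simp: \<alpha>_mem \<alpha>_\<alpha>)

lemma \<phi>_eq: "\<phi> = inv_into D \<sigma> \<circ> \<alpha>"
  by (rule ext) (simp add: face_succ_def)

sublocale vertex: finite_perm D \<sigma>
  by unfold_locales (fact finite_D, fact bij_\<sigma>)

sublocale edge: finite_perm D \<alpha>
  by unfold_locales (fact finite_D, fact bij_\<alpha>)

sublocale face: finite_perm D \<phi>
  unfolding \<phi>_eq
  by unfold_locales (fact finite_D, rule bij_betw_trans[OF bij_\<alpha> bij_betw_inv_into[OF bij_\<sigma>]])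

lemma \<sigma>_\<phi>: "b \<in> D \<Longrightarrow> \<sigma> (\<phi> b) = \<alpha> b"
  unfolding face_succ_def using bij_\<sigma> \<alpha>_mem by (simp add: bij_betw_def f_inv_into_f)

lemma vertex_\<phi>: assumes "b \<in> D" shows "orb \<sigma> (\<phi> b) = orb \<sigma> (\<alpha> b)"
proof -
  have "\<alpha> b \<in> orb \<sigma> (\<phi> b)"
    using f_in_orb[OF self_in_orb, of \<sigma> "\<phi> b"] \<sigma>_\<phi>[OF assms] by simp
  then show ?thesis
    using vertex.orb_eq face.funpow_mem[OF assms, of 1] by simp
qed

lemma outer_subset: "outer \<subseteq> D"
  by (rule face.orb_subset[OF oa_mem])

lemma inner_face_closed: assumes "a \<in> D - outer" shows "orb \<phi> a \<subseteq> D - outer"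
proof
  fix b assume b: "b \<in> orb \<phi> a"
  have "b \<notin> outer"
  proof
    assume "b \<in> outer"
    have "orb \<phi> b = orb \<phi> a"
      using face.orb_eq[of a b] assms b by blast
    moreover have "orb \<phi> b = outer"
      by (rule face.orb_eq[OF oa_mem \<open>b \<in> outer\<close>])
    ultimately have "orb \<phi> a = outer"
      by simp
    then show False
      using assms self_in_orb[of a \<phi>] by simp
  qed
  then show "b \<in> D - outer"
    using face.orb_subset[of a] assms b by blast
qed

lemma outer_mem: "(\<phi> ^^ n) oa \<in> outer"
  unfolding orb_def by (rule rangeI)

lemma outer_period: "(\<phi> ^^ n) oa = (\<phi> ^^ (n mod d)) oa"
  using funpow_mod_eq[where f=\<phi> and n=d and x=oa] face.funpow_eq_self_iff[OF oa_mem, of d]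
    card_outer by simp

lemma outer_index_mod_eq:
  assumes "(\<phi> ^^ i) oa = (\<phi> ^^ j) oa" shows "i mod d = j mod d"
proof -
  have le: "j mod d = i mod d" if "i \<le> j" "(\<phi> ^^ j) oa = (\<phi> ^^ i) oa" for i j
  proof -
    have "(\<phi> ^^ (j - i)) oa = oa"
      by (rule face.funpow_cancel[OF oa_mem that])
    then have "d dvd j - i"
      using face.funpow_eq_self_iff[OF oa_mem] card_outer by simp
    then show ?thesis
      using mod_eq_dvd_iff_nat[OF that(1)] by simp
  qed
  show ?thesis
  proof (cases "i \<le> j")
    case True
    then show ?thesis
      using le[OF True assms[symmetric]] by simp
  next
    case False
    then show ?thesis
      using le[of j i] assms by simp
  qed
qed

lemma outer_index: assumes "c \<in> outer" obtains m where "m < d" "c = (\<phi> ^^ m) oa"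
proof -
  obtain n where c: "c = (\<phi> ^^ n) oa"
    using assms unfolding orb_def by blast
  have "c = (\<phi> ^^ (n mod d)) oa"
    unfolding c by (rule outer_period)
  moreover have "n mod d < d"
    using three_le_d by simp
  ultimately show ?thesis
    using that by blast
qed

lemma \<sigma>_outer: "\<sigma> ((\<phi> ^^ Suc m) oa) = \<alpha> ((\<phi> ^^ m) oa)"
  using \<sigma>_\<phi>[OF face.funpow_mem[OF oa_mem]] by simp

text \<open>The outer boundary is a simple cycle of length at least 3, so no edge has the outer
  face on both sides.\<close>
lemma \<alpha>_outer: assumes "b \<in> outer" shows "\<alpha> b \<notin> outer"
proof
  assume \<alpha>b: "\<alpha> b \<in> outer"
  have b: "b \<in> D"
    using assms outer_subset by blast
  have "\<phi> b \<in> outer" "\<phi> (\<alpha> b) \<in> outer"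
    using f_in_orb assms \<alpha>b by fast+
  then have \<phi>b: "\<phi> b = \<alpha> b" and "\<phi> (\<alpha> b) = \<alpha> (\<alpha> b)"
    using inj_onD[OF inj_on_vertex_outer vertex_\<phi>[OF b]]
      inj_onD[OF inj_on_vertex_outer vertex_\<phi>[OF \<alpha>_mem[OF b]]] assms \<alpha>b \<alpha>_\<alpha>[OF b]
    by simp_all
  then have \<phi>\<alpha>b: "\<phi> (\<alpha> b) = b"
    using \<alpha>_\<alpha>[OF b] by simp
  have "(\<phi> ^^ n) b \<in> {b, \<alpha> b}" for n
    by (induction n) (auto simp: \<phi>b \<phi>\<alpha>b)
  then have "orb \<phi> b \<subseteq> {b, \<alpha> b}"
    unfolding orb_def by blast
  then have "card (orb \<phi> b) \<le> card {b, \<alpha> b}"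
    by (intro card_mono) simp_all
  also have "\<dots> \<le> 2"
    by (simp add: card_insert_if)
  finally have "card (orb \<phi> b) \<le> 2" .
  moreover have "orb \<phi> b = outer"
    using face.orb_eq[OF oa_mem assms] .
  ultimately show False
    using card_outer three_le_d by simp
qed

text \<open>\<open>boundary_arc i\<close> is the arc \<open>(v\<^sub>i, v\<^sub>i\<^sub>+\<^sub>1)\<close>; it has the outer face on its left.\<close>
abbreviation boundary_arc :: "nat \<Rightarrow> 'a" where "boundary_arc \<equiv> outer_arc D \<alpha> \<sigma> d oa"

lemma vertex_\<sigma>: assumes "y \<in> D" shows "orb \<sigma> (\<sigma> y) = orb \<sigma> y"
  using vertex.orb_eq[OF assms f_in_orb[OF self_in_orb]] .

lemma vertex_boundary_arc:
  assumes "i \<in> {1..d}" shows "orb \<sigma> (boundary_arc i) = orb \<sigma> ((\<phi> ^^ Suc (d - i)) oa)"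
  unfolding outer_arc_def \<sigma>_outer[symmetric]
  by (rule vertex_\<sigma>[OF face.funpow_mem[OF oa_mem]])

lemma boundary_arc_vertex_inj:
  assumes "i \<in> {1..d}" "j \<in> {1..d}" "orb \<sigma> (boundary_arc i) = orb \<sigma> (boundary_arc j)"
  shows "i = j"
proof -
  have "orb \<sigma> ((\<phi> ^^ Suc (d - i)) oa) = orb \<sigma> ((\<phi> ^^ Suc (d - j)) oa)"
    using assms vertex_boundary_arc by simp
  then have "(\<phi> ^^ Suc (d - i)) oa = (\<phi> ^^ Suc (d - j)) oa"
    using inj_onD[OF inj_on_vertex_outer] outer_mem by blast
  then have "Suc (d - i) mod d = Suc (d - j) mod d"
    by (rule outer_index_mod_eq)
  then show ?thesis
    using assms(1,2) by (auto simp: mod_Suc split: if_splits)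
qed

lemma boundary_arc_of_\<alpha>_outer:
  assumes "b \<in> D" "\<alpha> b \<in> outer" obtains i where "i \<in> {1..d}" "b = boundary_arc i"
proof -
  obtain m where m: "m < d" "\<alpha> b = (\<phi> ^^ m) oa"
    using outer_index[OF assms(2)] .
  then have "b = boundary_arc (d - m)"
    unfolding outer_arc_def using \<alpha>_\<alpha>[OF assms(1)] by force
  then show ?thesis
    using m(1) by (intro that[of "d - m"]) auto
qed

lemma outer_vertex_is_boundary_vertex:
  assumes "c \<in> outer" obtains i where "i \<in> {1..d}" "orb \<sigma> c = orb \<sigma> (boundary_arc i)"
proof -
  obtain m where m: "m < d" "c = (\<phi> ^^ m) oa"
    using outer_index[OF assms] .
  show ?thesis
  proof (cases m)
    case 0
    have "(\<phi> ^^ Suc (d - 1)) oa = (\<phi> ^^ 0) oa"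
      using outer_period[of d] three_le_d by simp
    then show ?thesis
      using that[of 1] vertex_boundary_arc[of 1] m 0 three_le_d by simp
  next
    case (Suc k)
    then have "Suc (d - (d - k)) = m"
      using m(1) by simp
    then show ?thesis
      using that[of "d - k"] vertex_boundary_arc[of "d - k"] m Suc by simp
  qed
qed

lemma vertex_\<alpha>_boundary_arc:
  assumes "i \<in> {1..d}" shows "orb \<sigma> (\<alpha> (boundary_arc i)) = orb \<sigma> (boundary_arc (i mod d + 1))"
proof -
  have \<alpha>_arc: "\<alpha> (boundary_arc i) = (\<phi> ^^ (d - i)) oa"
    unfolding outer_arc_def using \<alpha>_\<alpha>[OF face.funpow_mem[OF oa_mem]] by simp
  show ?thesis
  proof (cases "i = d")
    case True
    have "(\<phi> ^^ Suc (d - 1)) oa = (\<phi> ^^ 0) oa"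
      using outer_period[of d] three_le_d by simp
    then show ?thesis
      using \<alpha>_arc vertex_boundary_arc[of 1] True three_le_d by simp
  next
    case False
    then have index: "i mod d + 1 \<in> {1..d}" "Suc (d - (i mod d + 1)) = d - i"
      using assms by auto
    have "orb \<sigma> (boundary_arc (i mod d + 1)) = orb \<sigma> ((\<phi> ^^ Suc (d - (i mod d + 1))) oa)"
      by (rule vertex_boundary_arc[OF index(1)])
    also have "\<dots> = orb \<sigma> (\<alpha> (boundary_arc i))"
      unfolding index(2) \<alpha>_arc ..
    finally show ?thesis
      by simp
  qed
qed

section \<open>Counting vertices, edges and faces\<close>

abbreviation inner_arcs :: "'a set" where "inner_arcs \<equiv> {b. inner_arc D \<alpha> \<sigma> oa b}"
abbreviation inner_vertices :: "'a set" where "inner_vertices \<equiv> {x. inner_vertex D \<alpha> \<sigma> oa x}"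

lemma inner_vertex_imp_inner_arc:
  assumes "inner_vertex D \<alpha> \<sigma> oa x" shows "inner_arc D \<alpha> \<sigma> oa x"
proof -
  have x: "x \<in> D" and disj: "orb \<sigma> x \<inter> outer = {}"
    using assms unfolding inner_vertex_def by auto
  have "\<alpha> x \<notin> outer"
  proof
    assume "\<alpha> x \<in> outer"
    then have "\<phi> (\<alpha> x) \<in> outer"
      by (rule f_in_orb)
    moreover have "\<phi> (\<alpha> x) \<in> orb \<sigma> x"
      using vertex_\<phi>[OF \<alpha>_mem[OF x]] \<alpha>_\<alpha>[OF x] self_in_orb[of "\<phi> (\<alpha> x)" \<sigma>] by simp
    ultimately show False
      using disj by blast
  qed
  then show ?thesis
    using x disj self_in_orb[of x \<sigma>] unfolding inner_arc_def by blast
qed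

lemma \<alpha>_image_outer: "\<alpha> ` outer = {b \<in> D. \<alpha> b \<in> outer}"
proof (intro equalityI subsetI)
  fix b assume "b \<in> \<alpha> ` outer"
  then obtain c where "c \<in> outer" "b = \<alpha> c"
    by blast
  then show "b \<in> {b \<in> D. \<alpha> b \<in> outer}"
    using outer_subset \<alpha>_mem \<alpha>_\<alpha> by auto
next
  fix b assume "b \<in> {b \<in> D. \<alpha> b \<in> outer}"
  then show "b \<in> \<alpha> ` outer"
    using \<alpha>_\<alpha> by (auto intro!: image_eqI[of b \<alpha> "\<alpha> b"])
qed

lemma card_\<alpha>_outer: "card (\<alpha> ` outer) = d"
  using card_image[OF inj_on_subset[OF bij_betw_imp_inj_on[OF bij_\<alpha>] outer_subset]] card_outer
  by simp

lemma card_arcs: "card D = 2 * d + card inner_arcs"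
proof -
  have D: "D = outer \<union> (\<alpha> ` outer \<union> inner_arcs)"
    using outer_subset \<alpha>_image_outer unfolding inner_arc_def by blast
  have "outer \<inter> (\<alpha> ` outer \<union> inner_arcs) = {}" "\<alpha> ` outer \<inter> inner_arcs = {}"
    using \<alpha>_outer \<alpha>_image_outer unfolding inner_arc_def by blast+
  moreover have "finite outer" "finite (\<alpha> ` outer)" "finite inner_arcs"
    using finite_subset[OF outer_subset finite_D] finite_D unfolding inner_arc_def by auto
  ultimately show ?thesis
    by (subst D) (simp add: card_Un_disjoint card_outer card_\<alpha>_outer)
qed

lemma orb_\<alpha>: assumes "a \<in> D" shows "orb \<alpha> a = {a, \<alpha> a}"
proof
  have "(\<alpha> ^^ n) a \<in> {a, \<alpha> a}" for n
    by (induction n) (auto simp: \<alpha>_\<alpha>[OF assms])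
  then show "orb \<alpha> a \<subseteq> {a, \<alpha> a}"
    unfolding orb_def by blast
  show "{a, \<alpha> a} \<subseteq> orb \<alpha> a"
    using self_in_orb f_in_orb[OF self_in_orb] by fast
qed

lemma card_arcs_edges: "card D = 2 * card (orb \<alpha> ` D)"
proof -
  have "card D = (\<Sum>c\<in>orb \<alpha> ` D. card c)"
    using edge.sum_over_orbits[of D "\<lambda>_. 1 :: nat"] edge.orb_subset by simp
  also have "\<dots> = (\<Sum>c\<in>orb \<alpha> ` D. 2)"
    using \<alpha>_neq by (intro sum.cong refl) (force simp: orb_\<alpha> card_insert_if)
  finally show ?thesis
    by simp
qed

lemma card_vertices: "card (orb \<sigma> ` D) = d + card (orb \<sigma> ` inner_vertices)"
proof -
  have "orb \<sigma> ` D = orb \<sigma> ` outer \<union> orb \<sigma> ` inner_vertices"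
  proof (intro equalityI subsetI)
    fix v assume "v \<in> orb \<sigma> ` D"
    then obtain x where x: "x \<in> D" "v = orb \<sigma> x"
      by blast
    show "v \<in> orb \<sigma> ` outer \<union> orb \<sigma> ` inner_vertices"
    proof (cases "inner_vertex D \<alpha> \<sigma> oa x")
      case False
      then obtain y where "y \<in> orb \<sigma> x" "y \<in> outer"
        using x unfolding inner_vertex_def by blast
      then show ?thesis
        using vertex.orb_eq[OF x(1)] x(2) by blast
    qed (use x in blast)
  next
    fix v assume "v \<in> orb \<sigma> ` outer \<union> orb \<sigma> ` inner_vertices"
    then show "v \<in> orb \<sigma> ` D"
      using outer_subset unfolding inner_vertex_def by blast
  qed
  moreover have "orb \<sigma> ` outer \<inter> orb \<sigma> ` inner_vertices = {}"
    using self_in_orb unfolding inner_vertex_def by fastforce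
  moreover have "finite (orb \<sigma> ` outer)" "finite (orb \<sigma> ` inner_vertices)"
    using finite_subset[OF outer_subset finite_D] finite_D unfolding inner_vertex_def by auto
  ultimately show ?thesis
    using card_image[OF inj_on_vertex_outer] card_outer by (simp add: card_Un_disjoint)
qed

lemma card_faces: "card (orb \<phi> ` D) = Suc (card (orb \<phi> ` (D - outer)))"
proof -
  have "orb \<phi> ` D = insert outer (orb \<phi> ` (D - outer))"
    using face.orb_eq[OF oa_mem] oa_mem by blast
  moreover have "outer \<notin> orb \<phi> ` (D - outer)"
    using self_in_orb by fastforce
  ultimately show ?thesis
    using finite_D by simp
qed

text \<open>Euler's formula for the inner part of the map; inner arcs come in pairs, one pair per
  inner edge.\<close>
lemma euler_inner:
  "2 * int (card (orb \<phi> ` (D - outer)))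
     = 2 + int (card inner_arcs) - 2 * int (card (orb \<sigma> ` inner_vertices))"
  using euler card_faces card_vertices card_arcs card_arcs_edges by simp

end

section \<open>Jumps around the inner faces\<close>

locale GS_labeled_d_map = plane_d_map +
  fixes lab :: "'a \<Rightarrow> nat"
  assumes GS: "GS_labeling D \<alpha> \<sigma> d oa lab"
begin

abbreviation lab_jump :: "'a \<Rightarrow> 'a \<Rightarrow> nat" where "lab_jump b c \<equiv> jump d (lab b) (lab c)"

lemma lab_inner_arc: "inner_arc D \<alpha> \<sigma> oa a \<Longrightarrow> lab a \<in> {1..d}"
  and lab_boundary_arc: "i \<in> {1..d} \<Longrightarrow> lab (boundary_arc i) = i"
  and AL0: "i \<in> {1..d} \<Longrightarrow> inner_arc D \<alpha> \<sigma> oa a \<Longrightarrow> orb \<sigma> a = orb \<sigma> (boundary_arc i) \<Longrightarrow>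
    lab a = i"
  and AL1: "inner_vertex D \<alpha> \<sigma> oa a \<Longrightarrow> (\<Sum>b\<in>orb \<sigma> a. lab_jump b (\<sigma> b)) = d"
  and AL2: "inner_vertex D \<alpha> \<sigma> oa a \<Longrightarrow> lab_jump a (\<sigma> a) \<le> d - card (orb \<phi> a)"
  and AL3: "inner_arc D \<alpha> \<sigma> oa a \<Longrightarrow> lab_jump a (\<alpha> a) = d + 1 - card (orb \<phi> a)"
  using GS unfolding GS_labeling_def by blast+

lemma lab_at_outer_vertex:
  assumes "i \<in> {1..d}" "x \<in> D - outer" "orb \<sigma> x = orb \<sigma> (boundary_arc i)"
  shows "lab x = i"
proof (cases "inner_arc D \<alpha> \<sigma> oa x")
  case True
  then show ?thesis
    using AL0 assms by blast
next
  case False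
  then obtain j where j: "j \<in> {1..d}" "x = boundary_arc j"
    using boundary_arc_of_\<alpha>_outer assms(2) unfolding inner_arc_def by blast
  then have "j = i"
    using boundary_arc_vertex_inj assms(1,3) by simp
  then show ?thesis
    using lab_boundary_arc j by simp
qed

lemma lab_range: assumes "b \<in> D - outer" shows "lab b \<in> {1..d}"
proof (cases "inner_arc D \<alpha> \<sigma> oa b")
  case False
  then obtain i where "i \<in> {1..d}" "b = boundary_arc i"
    using boundary_arc_of_\<alpha>_outer assms unfolding inner_arc_def by blast
  then show ?thesis
    using lab_boundary_arc by simp
qed (rule lab_inner_arc)

lemma \<phi>_inner: assumes "b \<in> D - outer" shows "\<phi> b \<in> D - outer"
  by (rule subsetD[OF inner_face_closed[OF assms] f_in_orb[OF self_in_orb]])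

lemma face_degree_\<phi>: assumes "b \<in> D" shows "card (orb \<phi> (\<phi> b)) = card (orb \<phi> b)"
  using face.orb_eq[OF assms f_in_orb[OF self_in_orb]] by simp

lemma edge_jump_pos: assumes "inner_arc D \<alpha> \<sigma> oa b" shows "0 < lab_jump b (\<alpha> b)"
  using AL3[OF assms] face_degree_le[of b] assms unfolding inner_arc_def by simp

lemma face_jump_after_boundary_arc:
  assumes "b \<in> D - outer" "\<alpha> b \<in> outer" shows "lab_jump b (\<phi> b) = 1"
proof -
  obtain i where i: "i \<in> {1..d}" "b = boundary_arc i"
    using boundary_arc_of_\<alpha>_outer assms by blast
  have "lab (\<phi> b) = i mod d + 1"
  proof (rule lab_at_outer_vertex)
    show "i mod d + 1 \<in> {1..d}"
      using three_le_d by (simp add: Suc_le_eq)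
    show "\<phi> b \<in> D - outer"
      by (rule \<phi>_inner[OF assms(1)])
    show "orb \<sigma> (\<phi> b) = orb \<sigma> (boundary_arc (i mod d + 1))"
      using vertex_\<phi>[of b] vertex_\<alpha>_boundary_arc[OF i(1)] i(2) assms(1) by simp
  qed
  moreover have "lab b = i"
    using lab_boundary_arc i by simp
  ultimately show ?thesis
    using i(1) three_le_d by (cases "i = d") (auto simp: jump_def mod_Suc)
qed

lemma lab_\<phi>_at_outer_vertex:
  assumes "inner_arc D \<alpha> \<sigma> oa b" "\<not> inner_vertex D \<alpha> \<sigma> oa (\<alpha> b)"
  shows "lab (\<phi> b) = lab (\<alpha> b)"
proof -
  have b: "b \<in> D - outer" and \<alpha>b: "\<alpha> b \<in> D - outer"
    using assms(1) \<alpha>_mem unfolding inner_arc_def by auto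
  obtain c where c: "c \<in> orb \<sigma> (\<alpha> b)" "c \<in> outer"
    using assms(2) \<alpha>b unfolding inner_vertex_def by blast
  obtain i where i: "i \<in> {1..d}" "orb \<sigma> c = orb \<sigma> (boundary_arc i)"
    using outer_vertex_is_boundary_vertex[OF c(2)] .
  have "orb \<sigma> (\<alpha> b) = orb \<sigma> (boundary_arc i)"
    using vertex.orb_eq[of "\<alpha> b" c] c(1) \<alpha>b i(2) by simp
  then have "lab (\<alpha> b) = i" "lab (\<phi> b) = i"
    using lab_at_outer_vertex[OF i(1)] \<alpha>b \<phi>_inner[OF b] vertex_\<phi>[of b] b by simp_all
  then show ?thesis
    by simp
qed

lemma face_jump_at_inner_vertex:
  assumes "inner_arc D \<alpha> \<sigma> oa b" "inner_vertex D \<alpha> \<sigma> oa (\<alpha> b)"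
  shows "lab_jump (\<phi> b) (\<alpha> b) < lab_jump b (\<alpha> b)"
    and "lab_jump b (\<phi> b) = lab_jump b (\<alpha> b) - lab_jump (\<phi> b) (\<alpha> b)"
proof -
  have b: "b \<in> D - outer" and bD: "b \<in> D"
    using assms(1) unfolding inner_arc_def by auto
  have "inner_vertex D \<alpha> \<sigma> oa (\<phi> b)"
    using assms(2) vertex_\<phi>[OF bD] face.funpow_mem[OF bD, of 1] unfolding inner_vertex_def by simp
  then have "lab_jump (\<phi> b) (\<alpha> b) \<le> d - card (orb \<phi> b)"
    using AL2 \<sigma>_\<phi>[OF bD] face_degree_\<phi>[OF bD] by fastforce
  then show less: "lab_jump (\<phi> b) (\<alpha> b) < lab_jump b (\<alpha> b)"
    using AL3[OF assms(1)] face_degree_le[of b] b by simp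
  show "lab_jump b (\<phi> b) = lab_jump b (\<alpha> b) - lab_jump (\<phi> b) (\<alpha> b)"
    using jump_split[OF _ _ less] lab_range[OF b] lab_range[OF \<phi>_inner[OF b]] by simp
qed

text \<open>On an arc with the outer face on its left the edge term is 1: there the whole jump to the
  next arc of the face is 1 and the corner contributes nothing.\<close>
definition cross_jump :: "'a \<Rightarrow> int" where
  "cross_jump b = (if \<alpha> b \<in> outer then 1 else int (lab_jump b (\<alpha> b)))"

definition corner_jump :: "'a \<Rightarrow> int" where
  "corner_jump x = (if inner_vertex D \<alpha> \<sigma> oa x then int (lab_jump x (\<sigma> x)) else 0)"

lemma face_jump_decomp:
  assumes "b \<in> D - outer"
  shows "int (lab_jump b (\<phi> b)) = cross_jump b - corner_jump (\<phi> b)"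
    and "lab_jump b (\<phi> b) \<noteq> 0"
proof -
  have bD: "b \<in> D"
    using assms by simp
  have same_vertex: "inner_vertex D \<alpha> \<sigma> oa (\<phi> b) \<longleftrightarrow> inner_vertex D \<alpha> \<sigma> oa (\<alpha> b)"
    using vertex_\<phi>[OF bD] face.funpow_mem[OF bD, of 1] \<alpha>_mem[OF bD]
    unfolding inner_vertex_def by simp
  have "int (lab_jump b (\<phi> b)) = cross_jump b - corner_jump (\<phi> b) \<and> lab_jump b (\<phi> b) \<noteq> 0"
  proof (cases "\<alpha> b \<in> outer")
    case True
    then have "\<not> inner_vertex D \<alpha> \<sigma> oa (\<alpha> b)"
      using self_in_orb unfolding inner_vertex_def by fast
    then show ?thesis
      using face_jump_after_boundary_arc[OF assms True] True same_vertex
      unfolding cross_jump_def corner_jump_def by simp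
  next
    case False
    then have inner: "inner_arc D \<alpha> \<sigma> oa b"
      using assms unfolding inner_arc_def by simp
    show ?thesis
    proof (cases "inner_vertex D \<alpha> \<sigma> oa (\<alpha> b)")
      case True
      then show ?thesis
        using face_jump_at_inner_vertex[OF inner True] False same_vertex \<sigma>_\<phi>[OF bD]
        unfolding cross_jump_def corner_jump_def by simp
    next
      case outer_vertex: False
      then show ?thesis
        using lab_\<phi>_at_outer_vertex[OF inner outer_vertex] edge_jump_pos[OF inner] False
          same_vertex
        unfolding cross_jump_def corner_jump_def by simp
    qed
  qed
  then show "int (lab_jump b (\<phi> b)) = cross_jump b - corner_jump (\<phi> b)"
    and "lab_jump b (\<phi> b) \<noteq> 0"
    by simp_all
qed

lemma sum_cross_jump:
  "(\<Sum>b\<in>D - outer. cross_jump b) = int d + (\<Sum>b\<in>inner_arcs. int (lab_jump b (\<alpha> b)))"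
proof -
  have "D - outer = \<alpha> ` outer \<union> inner_arcs"
    using \<alpha>_image_outer \<alpha>_outer unfolding inner_arc_def by blast
  moreover have "\<alpha> ` outer \<inter> inner_arcs = {}"
    using \<alpha>_image_outer unfolding inner_arc_def by blast
  moreover have "finite (\<alpha> ` outer)" "finite inner_arcs"
    using finite_subset[OF outer_subset finite_D] finite_D unfolding inner_arc_def by auto
  moreover have "(\<Sum>b\<in>\<alpha> ` outer. cross_jump b) = int d"
    using \<alpha>_image_outer card_\<alpha>_outer by (simp add: cross_jump_def)
  moreover have "(\<Sum>b\<in>inner_arcs. cross_jump b) = (\<Sum>b\<in>inner_arcs. int (lab_jump b (\<alpha> b)))"
    by (intro sum.cong refl) (simp add: cross_jump_def inner_arc_def)
  ultimately show ?thesis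
    by (simp add: sum.union_disjoint)
qed

text \<open>The jumps along an inner arc and along its opposite are non-zero by (AL3), so they add
  up to \<open>d\<close>.\<close>
lemma sum_edge_jump:
  "2 * (\<Sum>b\<in>inner_arcs. int (lab_jump b (\<alpha> b))) = int d * int (card inner_arcs)"
proof -
  have \<alpha>_inner: "inner_arc D \<alpha> \<sigma> oa (\<alpha> b)" if "inner_arc D \<alpha> \<sigma> oa b" for b
    using that \<alpha>_mem \<alpha>_\<alpha> unfolding inner_arc_def by auto
  have "bij_betw \<alpha> inner_arcs inner_arcs"
    by (rule bij_betw_byWitness[where f'=\<alpha>]) (auto simp: \<alpha>_inner \<alpha>_\<alpha> \<alpha>_mem inner_arc_def)
  then have "(\<Sum>b\<in>inner_arcs. int (lab_jump b (\<alpha> b)))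
      = (\<Sum>b\<in>inner_arcs. int (lab_jump (\<alpha> b) b))"
    using sum.reindex_bij_betw[of \<alpha> inner_arcs inner_arcs "\<lambda>b. int (lab_jump b (\<alpha> b))"]
      \<alpha>_\<alpha> by (simp add: inner_arc_def)
  then have "2 * (\<Sum>b\<in>inner_arcs. int (lab_jump b (\<alpha> b)))
      = (\<Sum>b\<in>inner_arcs. int (lab_jump b (\<alpha> b) + lab_jump (\<alpha> b) b))"
    by (simp add: sum.distrib)
  also have "\<dots> = (\<Sum>b\<in>inner_arcs. int d)"
  proof (intro sum.cong refl)
    fix b assume "b \<in> inner_arcs"
    then have inner: "inner_arc D \<alpha> \<sigma> oa b"
      by simp
    have "lab_jump b (\<alpha> b) + lab_jump (\<alpha> b) b = d"
      by (rule jump_add_jump_swap)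
        (use lab_inner_arc[OF inner] lab_inner_arc[OF \<alpha>_inner[OF inner]] edge_jump_pos[OF inner]
          in auto)
    then show "int (lab_jump b (\<alpha> b) + lab_jump (\<alpha> b) b) = int d"
      by simp
  qed
  finally show ?thesis
    by simp
qed

lemma sum_corner_jump:
  "(\<Sum>b\<in>D - outer. corner_jump (\<phi> b)) = int d * int (card (orb \<sigma> ` inner_vertices))"
proof -
  have "bij_betw \<phi> outer outer"
    using inj_on_subset[OF bij_betw_imp_inj_on[OF face.bij] outer_subset] face.image_orb[OF oa_mem]
    by (simp add: bij_betw_def)
  then have "bij_betw \<phi> (D - outer) (D - outer)"
    by (rule bij_betw_DiffI[OF face.bij _ outer_subset outer_subset])
  then have "(\<Sum>b\<in>D - outer. corner_jump (\<phi> b)) = (\<Sum>b\<in>D - outer. corner_jump b)"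
    by (rule sum.reindex_bij_betw)
  also have "\<dots> = (\<Sum>x\<in>inner_vertices. int (lab_jump x (\<sigma> x)))"
  proof -
    have "inner_vertices \<subseteq> D - outer"
      using inner_vertex_imp_inner_arc unfolding inner_arc_def by blast
    then show ?thesis
      unfolding corner_jump_def using finite_D by (simp add: sum.If_cases Int_absorb1)
  qed
  also have "\<dots> = (\<Sum>v\<in>orb \<sigma> ` inner_vertices. \<Sum>x\<in>v. int (lab_jump x (\<sigma> x)))"
  proof (rule vertex.sum_over_orbits)
    show "inner_vertices \<subseteq> D"
      unfolding inner_vertex_def by blast
    show "orb \<sigma> x \<subseteq> inner_vertices" if "x \<in> inner_vertices" for x
      using that vertex.orb_eq vertex.orb_subset unfolding inner_vertex_def by blast
  qed
  also have "\<dots> = (\<Sum>v\<in>orb \<sigma> ` inner_vertices. int d)"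
    using AL1 by (intro sum.cong refl) (auto simp flip: of_nat_sum)
  finally show ?thesis
    by simp
qed

lemma sum_face_jump:
  "(\<Sum>b\<in>D - outer. lab_jump b (\<phi> b)) = d * card (orb \<phi> ` (D - outer))"
proof -
  have "int (\<Sum>b\<in>D - outer. lab_jump b (\<phi> b))
      = (\<Sum>b\<in>D - outer. cross_jump b) - (\<Sum>b\<in>D - outer. corner_jump (\<phi> b))"
    using face_jump_decomp(1) by (simp add: sum_subtractf)
  then have "2 * int (\<Sum>b\<in>D - outer. lab_jump b (\<phi> b))
      = int d * (2 + int (card inner_arcs) - 2 * int (card (orb \<sigma> ` inner_vertices)))"
    using sum_cross_jump sum_edge_jump sum_corner_jump by (simp add: algebra_simps)
  also have "\<dots> = 2 * (int d * int (card (orb \<phi> ` (D - outer))))"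
    unfolding euler_inner[symmetric] by simp
  finally have "int (\<Sum>b\<in>D - outer. lab_jump b (\<phi> b)) = int (d * card (orb \<phi> ` (D - outer)))"
    by simp
  then show ?thesis
    by (simp only: of_nat_eq_iff)
qed

lemma face_jump_sum_ge:
  assumes "a \<in> D - outer" shows "d \<le> (\<Sum>b\<in>orb \<phi> a. lab_jump b (\<phi> b))"
proof -
  let ?s = "\<Sum>b\<in>orb \<phi> a. lab_jump b (\<phi> b)"
  have face: "orb \<phi> a \<subseteq> D - outer"
    by (rule inner_face_closed[OF assms])
  have "int ?s mod int d = (\<Sum>b\<in>orb \<phi> a. (int (lab (\<phi> b)) - int (lab b)) mod int d) mod int d"
    using face lab_range jump_eq_mod by (simp add: subset_iff)
  also have "\<dots> = (\<Sum>b\<in>orb \<phi> a. int (lab (\<phi> b)) - int (lab b)) mod int d"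
    by (rule mod_sum_eq)
  also have "(\<Sum>b\<in>orb \<phi> a. int (lab (\<phi> b)) - int (lab b)) = 0"
    using face.sum_orb_shift[of a "\<lambda>b. int (lab b)"] assms by (simp add: sum_subtractf)
  finally have "int d dvd int ?s"
    by (simp add: mod_0_imp_dvd)
  then have "d dvd ?s"
    by (simp only: of_nat_dvd_iff)
  moreover have "0 < ?s"
  proof (rule sum_pos)
    show "finite (orb \<phi> a)"
      using finite_subset[OF face] finite_D by simp
    show "orb \<phi> a \<noteq> {}"
      using self_in_orb by fast
    show "0 < lab_jump b (\<phi> b)" if "b \<in> orb \<phi> a" for b
      using face_jump_decomp(2) face that by blast
  qed
  ultimately show ?thesis
    by (rule dvd_imp_le)
qed

lemma face_jump_sum:
  assumes "a \<in> D - outer" shows "(\<Sum>b\<in>orb \<phi> a. lab_jump b (\<phi> b)) = d"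
proof -
  let ?s = "\<lambda>f. \<Sum>b\<in>f. lab_jump b (\<phi> b)"
  have "(\<Sum>b\<in>D - outer. lab_jump b (\<phi> b)) = (\<Sum>f\<in>orb \<phi> ` (D - outer). ?s f)"
    by (rule face.sum_over_orbits[OF Diff_subset inner_face_closed])
  then have "(\<Sum>f\<in>orb \<phi> ` (D - outer). d) = (\<Sum>f\<in>orb \<phi> ` (D - outer). ?s f)"
    using sum_face_jump by (simp add: mult.commute)
  then have "d = ?s (orb \<phi> a)"
    by (rule sum_mono_inv) (use face_jump_sum_ge assms finite_D in auto)
  then show ?thesis
    by simp
qed

end

theorem mainTheorem15:
  assumes "d_map D \<alpha> \<sigma> d oa"
    and "GS_labeling D \<alpha> \<sigma> d oa lab"
  shows "\<forall>a\<in>D. a \<notin> orb (face_succ D \<alpha> \<sigma>) oa \<longrightarrow>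
     (\<forall>b\<in>orb (face_succ D \<alpha> \<sigma>) a. jump d (lab b) (lab (face_succ D \<alpha> \<sigma> b)) \<noteq> 0) \<and>
     (\<Sum>b\<in>orb (face_succ D \<alpha> \<sigma>) a. jump d (lab b) (lab (face_succ D \<alpha> \<sigma> b))) = d"
proof (intro ballI impI)
  interpret GS_labeled_d_map D \<alpha> \<sigma> d oa lab
    using assms by unfold_locales
  fix a assume "a \<in> D" "a \<notin> outer"
  then have a: "a \<in> D - outer"
    by simp
  show "(\<forall>b\<in>orb \<phi> a. lab_jump b (\<phi> b) \<noteq> 0) \<and> (\<Sum>b\<in>orb \<phi> a. lab_jump b (\<phi> b)) = d"
    using face_jump_decomp(2) inner_face_closed[OF a] face_jump_sum[OF a] by blast
qed

end
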